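(* Let $r\ge1$, $n$ be integers and let $\sigma:\mathbb{Z}_n\to\{0,1\}$ be a temporally periodic configuration in which every maximal homogeneous block has length at most $r$. Then $\sigma$ is balanced, i.e. $|\{i:\sigma(i)=0\}|=|\{i:\sigma(i)=1\}|$.
   Context: Cells are elements of $\mathbb{Z}_n$, arithmetic mod $n$; $[a,b]$ denotes the cyclic interval $a,\dots,b$. The majority rule with radius $r$: $\mathrm{maj}_r(\sigma)(i)=0$ if among the cells of $[i-r,i+r]$ strictly more have value $0$ than $1$ under $\sigma$, and $=1$ otherwise. $\sigma$ is temporally periodic if $\mathrm{maj}_r(\mathrm{maj}_r(\sigma))=\sigma$. A maximal homogeneous block of $\sigma$ with value $\beta$ is a cell interval $[i,j]$ with $\sigma(k)=\beta$ for all $k\in[i,j]$ and $\sigma(i-1)=\sigma(j+1)=1-\beta$. *)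

theory Defs
  imports Main
begin

text \<open>Cells are the residues 0..n-1 (int); a configuration is sigma :: int => nat with
  values in {0,1} on {0..<n}; cell k is accessed as sigma (k mod n).\<close>

text \<open>Number of cells (counted with multiplicity, i.e. over offsets d in [-r,r]) of the
  window [i-r,i+r] with value b.\<close>
definition win_count :: "int \<Rightarrow> int \<Rightarrow> (int \<Rightarrow> nat) \<Rightarrow> int \<Rightarrow> nat \<Rightarrow> nat" where
  "win_count n r \<sigma> i b = card {d \<in> {-r..r}. \<sigma> ((i + d) mod n) = b}"

definition maj :: "int \<Rightarrow> int \<Rightarrow> (int \<Rightarrow> nat) \<Rightarrow> (int \<Rightarrow> nat)" where
  "maj n r \<sigma> = (\<lambda>i. if win_count n r \<sigma> i 0 > win_count n r \<sigma> i 1 then 0 else 1)"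

definition temporally_periodic :: "int \<Rightarrow> int \<Rightarrow> (int \<Rightarrow> nat) \<Rightarrow> bool" where
  "temporally_periodic n r \<sigma> \<longleftrightarrow> (\<forall>i\<in>{0..<n}. maj n r (maj n r \<sigma>) i = \<sigma> i)"

definition max_block :: "int \<Rightarrow> (int \<Rightarrow> nat) \<Rightarrow> int \<Rightarrow> int \<Rightarrow> nat \<Rightarrow> bool" where
  "max_block n \<sigma> s L \<beta> \<longleftrightarrow> s \<in> {0..<n} \<and> 1 \<le> L \<and> L \<le> n \<and>
     (\<forall>k\<in>{0..<L}. \<sigma> ((s + k) mod n) = \<beta>) \<and>
     \<sigma> ((s - 1) mod n) = 1 - \<beta> \<and> \<sigma> ((s + L) mod n) = 1 - \<beta>"

definition in_block :: "int \<Rightarrow> int \<Rightarrow> int \<Rightarrow> int \<Rightarrow> bool" where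
  "in_block n s L i \<longleftrightarrow> (\<exists>k\<in>{0..<L}. (s + k) mod n = i)"

end

theory Submission
  imports Defs
begin

text \<open>
  Encode \<open>\<sigma>\<close> and its majority image as \<open>n\<close>-periodic \<open>\<plusminus>1\<close> sequences \<open>u\<close> and \<open>v\<close> on
  the integers; temporal periodicity says that each is the majority image of the other, and
  runs of both have length at most \<open>r\<close>. At a sign change \<open>a\<close> of \<open>u\<close> the two windows
  of \<open>v\<close> around \<open>a\<close> have sums \<open>\<plusminus>1\<close>, which forces \<open>v (a + r) = u a\<close> and
  \<open>v (a - r - 1) = u (a - 1)\<close>, and symmetrically for \<open>u\<close> and \<open>v\<close> exchanged. Hence for every run
  \<open>[c, c')\<close> of \<open>v\<close> there is exactly one sign change \<open>e c\<close> of \<open>u\<close> in \<open>(c + r, c' + r]\<close>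
  and exactly one, \<open>f c\<close>, in \<open>(c - r - 1, c' - r - 1]\<close>, and the sum of \<open>v\<close> over \<open>[c, c')\<close> equals
  the sum of \<open>u\<close> over \<open>[f c, e c)\<close>. As \<open>e\<close> and \<open>f\<close> are periodic bijections onto the
  sign changes of \<open>u\<close>, the intervals \<open>[f c, e c)\<close> of one period cover every cell the same
  number \<open>D\<close> of times, so the period sum of \<open>v\<close> is \<open>D\<close> times that of \<open>u\<close>; and
  \<open>D \<ge> 2\<close> because each \<open>[f c, e c)\<close> is longer than its run. With \<open>u\<close> and \<open>v\<close>
  exchanged this forces both period sums to vanish, i.e. \<open>\<sigma>\<close> is balanced.
\<close>

lemma sum_int_interval_split:
  fixes a m b :: int
  assumes "a \<le> m" "m \<le> b"
  shows "sum g {a..<b} = sum g {a..<m} + sum g {m..<b}"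
proof -
  have "{a..<b} = {a..<m} \<union> {m..<b}" using assms by auto
  then show ?thesis by (simp add: sum.union_disjoint)
qed

definition prefix_sum :: "(int \<Rightarrow> int) \<Rightarrow> int \<Rightarrow> int" where
  "prefix_sum w t = sum w {0..<t} - sum w {t..<0}"

lemma prefix_sum_diff:
  assumes "a \<le> b"
  shows "prefix_sum w b - prefix_sum w a = sum w {a..<b}"
proof (cases "0 \<le> a")
  case True
  then show ?thesis using assms sum_int_interval_split[of 0 a b w] by (simp add: prefix_sum_def)
next
  case False
  then show ?thesis
    using assms sum_int_interval_split[of a 0 b w] sum_int_interval_split[of a b 0 w]
    by (cases "0 \<le> b") (simp_all add: prefix_sum_def)
qed

lemma prefix_sum_diff_const:
  assumes "a \<le> b" "\<And>k. a \<le> k \<Longrightarrow> k < b \<Longrightarrow> w k = c"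
  shows "prefix_sum w b - prefix_sum w a = c * (b - a)"
proof -
  have "sum w {a..<b} = sum (\<lambda>_. c) {a..<b}" using assms(2) by (intro sum.cong) auto
  then show ?thesis using assms(1) prefix_sum_diff[of a b w] by simp
qed

lemma prefix_sum_add1: "prefix_sum w (t + 1) = prefix_sum w t + w t"
proof -
  have "{t..<t + 1} = {t}" by auto
  then show ?thesis using prefix_sum_diff[of t "t + 1" w] by simp
qed

lemma prefix_sum_add_period:
  fixes w :: "int \<Rightarrow> int"
  assumes "\<And>i. w (i + n) = w i" "n \<ge> 0"
  shows "prefix_sum w (t + n) = prefix_sum w t + prefix_sum w n"
proof -
  have "prefix_sum w (s + 1 + n) - prefix_sum w (s + 1) = prefix_sum w (s + n) - prefix_sum w s" for s
    using prefix_sum_add1[of w "s + n"] prefix_sum_add1[of w s] assms(1)[of s]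
    by (simp add: add.commute add.left_commute)
  then have "prefix_sum w (t + n) - prefix_sum w t = prefix_sum w (0 + n) - prefix_sum w 0"
    by (induction t rule: int_induct[where k=0]) (simp_all, metis diff_add_cancel)
  then show ?thesis by (simp add: prefix_sum_def)
qed

lemma prefix_sum_add_periods:
  fixes w :: "int \<Rightarrow> int"
  assumes "\<And>i. w (i + n) = w i" "n \<ge> 0"
  shows "prefix_sum w (t + k * n) = prefix_sum w t + k * prefix_sum w n"
proof (induction k rule: int_induct[where k=0])
  case (step1 k)
  have "t + (k + 1) * n = (t + k * n) + n" by (simp add: algebra_simps)
  then show ?case using step1.IH prefix_sum_add_period[of w n, OF assms, of "t + k * n"]
    by (simp add: algebra_simps)
next
  case (step2 k)
  have "t + k * n = (t + (k - 1) * n) + n" by (simp add: algebra_simps)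
  then show ?case using step2.IH prefix_sum_add_period[of w n, OF assms, of "t + (k - 1) * n"]
    by (simp add: algebra_simps)
qed simp

lemma exists_change:
  fixes w :: "int \<Rightarrow> 'a"
  assumes "p \<le> q" "w p \<noteq> w q"
  shows "\<exists>j. p < j \<and> j \<le> q \<and> w (j - 1) \<noteq> w j"
  using assms
proof (induction q rule: int_ge_induct)
  case (step q)
  show ?case
  proof (cases "w p = w q")
    case True
    then show ?thesis using step.hyps step.prems by (intro exI[of _ "q + 1"]) simp
  next
    case False
    then show ?thesis using step.IH by fastforce
  qed
qed simp

lemma constant_if_no_change:
  fixes w :: "int \<Rightarrow> 'a"
  assumes "\<And>j. p < j \<Longrightarrow> j \<le> q \<Longrightarrow> w (j - 1) = w j" "p \<le> k" "k \<le> q"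
  shows "w k = w p"
proof (rule ccontr)
  assume "w k \<noteq> w p"
  then obtain j where "p < j" "j \<le> k" "w (j - 1) \<noteq> w j"
    using exists_change[of p k w] assms(2) by metis
  then show False using assms(1)[of j] assms(3) by simp
qed

lemma bij_betw_mod_equivariant:
  fixes g :: "int \<Rightarrow> int" and P Q :: "int \<Rightarrow> bool"
  assumes n: "n \<ge> 1"
    and P_periodic: "\<And>c k. P (c + k * n) = P c"
    and g_equivariant: "\<And>c k. P c \<Longrightarrow> g (c + k * n) = g c + k * n"
    and inj: "inj_on g {c. P c}"
    and image: "g ` {c. P c} = {a. Q a}"
  shows "bij_betw (\<lambda>c. g c mod n) {c \<in> {c0..<c0 + n}. P c} {a \<in> {0..<n}. Q a}"
proof (rule bij_betw_imageI)
  show "inj_on (\<lambda>c. g c mod n) {c \<in> {c0..<c0 + n}. P c}"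
  proof (rule inj_onI)
    fix c1 c2 assume c1: "c1 \<in> {c \<in> {c0..<c0 + n}. P c}" and c2: "c2 \<in> {c \<in> {c0..<c0 + n}. P c}"
      and eq: "g c1 mod n = g c2 mod n"
    define k where "k = g c2 div n - g c1 div n"
    have "k * n = g c2 div n * n - g c1 div n * n" by (simp add: k_def left_diff_distrib)
    then have "g c2 = g c1 + k * n"
      using eq div_mult_mod_eq[of "g c1" n] div_mult_mod_eq[of "g c2" n] by linarith
    then have "g c2 = g (c1 + k * n)" using g_equivariant c1 by simp
    then have "c2 = c1 + k * n" using inj P_periodic c1 c2 by (auto dest: inj_onD)
    then have "(c2 - c0) mod n = (c1 - c0) mod n"
      by (metis diff_add_eq mod_mult_self1)
    then show "c1 = c2" using c1 c2 by simp
  qed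
  show "(\<lambda>c. g c mod n) ` {c \<in> {c0..<c0 + n}. P c} = {a \<in> {0..<n}. Q a}"
  proof (intro equalityI subsetI)
    fix a assume "a \<in> (\<lambda>c. g c mod n) ` {c \<in> {c0..<c0 + n}. P c}"
    then obtain c where c: "P c" "a = g c mod n" by auto
    have "a = g (c + (- (g c div n)) * n)"
      using c g_equivariant[of c "- (g c div n)"] by (simp add: minus_div_mult_eq_mod)
    then have "Q a" using image P_periodic c(1) by blast
    then show "a \<in> {a \<in> {0..<n}. Q a}" using c n by simp
  next
    fix a assume a: "a \<in> {a \<in> {0..<n}. Q a}"
    then obtain c where c: "P c" "g c = a" using image by (metis (mono_tags) imageE mem_Collect_eq)
    define k where "k = (c - c0) div n"
    have "c - k * n - c0 = (c - c0) mod n"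
      unfolding k_def by (simp add: minus_div_mult_eq_mod[symmetric])
    moreover have "0 \<le> (c - c0) mod n" "(c - c0) mod n < n" using n by simp_all
    ultimately have "c - k * n \<in> {c0..<c0 + n}" by simp
    moreover have "P (c - k * n)" using P_periodic[of c "- k"] c(1) by simp
    moreover have "g (c - k * n) mod n = a"
      using g_equivariant[of c "- k"] c a by (simp add: mod_mult_self1[of a "- k" n, simplified])
    ultimately show "a \<in> (\<lambda>c. g c mod n) ` {c \<in> {c0..<c0 + n}. P c}"
      by (intro image_eqI[of _ _ "c - k * n"]) auto
  qed
qed

lemma sum_reindex_mod:
  fixes g h :: "int \<Rightarrow> int"
  assumes "bij_betw (\<lambda>c. g c mod n) C A" and "\<And>a k. h (a + k * n) = h a + k * H"
  shows "(\<Sum>c\<in>C. h (g c)) = (\<Sum>a\<in>A. h a) + H * (\<Sum>c\<in>C. g c div n)"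
proof -
  have "h (g c) = h (g c mod n) + H * (g c div n)" for c
    using assms(2)[of "g c mod n" "g c div n"] by (simp add: mult.commute)
  then have "(\<Sum>c\<in>C. h (g c)) = (\<Sum>c\<in>C. h (g c mod n)) + H * (\<Sum>c\<in>C. g c div n)"
    by (simp add: sum.distrib sum_distrib_left)
  also have "(\<Sum>c\<in>C. h (g c mod n)) = (\<Sum>a\<in>A. h a)"
    using sum.reindex_bij_betw[OF assms(1)] .
  finally show ?thesis .
qed

locale short_runs =
  fixes n r :: int and w :: "int \<Rightarrow> int"
  assumes period_pos: "n \<ge> 1"
    and periodic: "\<And>i k. w (i + k * n) = w i"
    and sign: "\<And>i. w i = 1 \<or> w i = -1"
    and run_bound: "\<And>i. \<exists>k\<in>{1..r}. w (i + k) \<noteq> w i"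
begin

definition boundary :: "int \<Rightarrow> bool" where
  "boundary i \<longleftrightarrow> w (i - 1) \<noteq> w i"

definition next_boundary :: "int \<Rightarrow> int" where
  "next_boundary i = Min {j \<in> {i<..i + r}. boundary j}"

lemma boundary_periodic: "boundary (i + k * n) = boundary i"
  using periodic[of i k] periodic[of "i - 1" k] by (simp add: boundary_def algebra_simps)

lemma sign_flip_at_boundary: "boundary c \<Longrightarrow> w (c - 1) = - w c"
  using sign[of c] sign[of "c - 1"] by (auto simp: boundary_def)

lemma boundary_within_radius: "\<exists>j. i < j \<and> j \<le> i + r \<and> boundary j"
proof -
  obtain k where "k \<in> {1..r}" "w (i + k) \<noteq> w i" using run_bound by blast
  then show ?thesis
    using exists_change[of i "i + k" w] by (auto simp: boundary_def)
qed

lemma next_boundary: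
  shows next_boundary_gt: "i < next_boundary i"
    and next_boundary_le: "next_boundary i \<le> i + r"
    and boundary_next_boundary: "boundary (next_boundary i)"
    and no_boundary_before_next: "i < j \<Longrightarrow> j < next_boundary i \<Longrightarrow> \<not> boundary j"
proof -
  let ?B = "{j \<in> {i<..i + r}. boundary j}"
  have "finite ?B" by (rule finite_subset[of _ "{i<..i + r}"]) auto
  moreover have "?B \<noteq> {}" using boundary_within_radius[of i] by auto
  ultimately have B: "next_boundary i \<in> ?B" and min: "\<And>j. j \<in> ?B \<Longrightarrow> next_boundary i \<le> j"
    unfolding next_boundary_def by (rule Min_in, simp)
  from B show "i < next_boundary i" "next_boundary i \<le> i + r" "boundary (next_boundary i)"
    by simp_all
  show "i < j \<Longrightarrow> j < next_boundary i \<Longrightarrow> \<not> boundary j"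
    using min[of j] B by force
qed

lemma next_boundary_le_boundary: "i < j \<Longrightarrow> boundary j \<Longrightarrow> next_boundary i \<le> j"
  using no_boundary_before_next by force

lemma next_boundary_eqI:
  assumes "i < j" "boundary j" "\<And>k. i < k \<Longrightarrow> k < j \<Longrightarrow> \<not> boundary k"
  shows "next_boundary i = j"
  using next_boundary_le_boundary[OF assms(1,2)] assms(3)[of "next_boundary i"]
    next_boundary_gt[of i] boundary_next_boundary[of i] by force

lemma next_boundary_periodic: "next_boundary (i + k * n) = next_boundary i + k * n"
proof (rule next_boundary_eqI)
  show "i + k * n < next_boundary i + k * n" using next_boundary_gt by simp
  show "boundary (next_boundary i + k * n)" using boundary_next_boundary boundary_periodic by simp
  fix j assume "i + k * n < j" "j < next_boundary i + k * n"
  then show "\<not> boundary j"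
    using no_boundary_before_next[of i "j + (- k) * n"] boundary_periodic[of j "- k"] by simp
qed

lemma constant_before_next_boundary: "i \<le> j \<Longrightarrow> j < next_boundary i \<Longrightarrow> w j = w i"
  using constant_if_no_change[of i "next_boundary i - 1" w j] no_boundary_before_next[of i]
  by (force simp: boundary_def)

lemma value_before_next_boundary: "w (next_boundary i - 1) = w i"
proof -
  have "i \<le> next_boundary i - 1" using next_boundary_gt[of i] by simp
  then show ?thesis using constant_before_next_boundary by simp
qed

lemma value_at_next_boundary: "w (next_boundary i) = - w i"
proof -
  have "w (next_boundary i - 1) = - w (next_boundary i)"
    by (rule sign_flip_at_boundary[OF boundary_next_boundary])
  then show ?thesis using value_before_next_boundary[of i] by simp
qed

lemma boundary_enclosing: "\<exists>c. boundary c \<and> c \<le> t \<and> t < next_boundary c"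
proof -
  let ?B = "{c \<in> {t - r..t}. boundary c}"
  have "finite ?B" by (rule finite_subset[of _ "{t - r..t}"]) auto
  moreover have "?B \<noteq> {}" using boundary_within_radius[of "t - r"] by auto
  ultimately have c: "Max ?B \<in> ?B" and c_max: "\<And>c. c \<in> ?B \<Longrightarrow> c \<le> Max ?B"
    by (rule Max_in, simp)
  have "t < next_boundary (Max ?B)"
  proof (rule ccontr)
    assume "\<not> t < next_boundary (Max ?B)"
    then have "next_boundary (Max ?B) \<in> ?B"
      using c next_boundary_gt[of "Max ?B"] boundary_next_boundary[of "Max ?B"] by auto
    then show False using c_max next_boundary_gt[of "Max ?B"] by fastforce
  qed
  then show ?thesis using c by auto
qed

lemma sum_by_runs:
  fixes F :: "int \<Rightarrow> int"
  assumes "boundary c0" "boundary t" "c0 \<le> t"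
  shows "sum F {c0..<t} = (\<Sum>c\<in>{c \<in> {c0..<t}. boundary c}. sum F {c..<next_boundary c})"
  using assms
proof (induction "nat (t - c0)" arbitrary: c0 rule: less_induct)
  case less
  show ?case
  proof (cases "c0 = t")
    case False
    let ?c1 = "next_boundary c0"
    have c1: "c0 < ?c1" "?c1 \<le> t"
      using next_boundary_gt[of c0] next_boundary_le_boundary[of c0 t] less.prems False by auto
    have IH: "sum F {?c1..<t} = (\<Sum>c\<in>{c \<in> {?c1..<t}. boundary c}. sum F {c..<next_boundary c})"
      using less.hyps[of ?c1] c1 boundary_next_boundary[of c0] less.prems by auto
    have runs: "{c \<in> {c0..<t}. boundary c} = insert c0 {c \<in> {?c1..<t}. boundary c}"
    proof (intro equalityI subsetI)
      fix c assume c: "c \<in> {c \<in> {c0..<t}. boundary c}"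
      show "c \<in> insert c0 {c \<in> {?c1..<t}. boundary c}"
      proof (cases "c = c0")
        case False
        then have "\<not> c < ?c1" using c no_boundary_before_next[of c0 c] by auto
        then show ?thesis using c by auto
      qed simp
    qed (use c1 less.prems False in auto)
    have "finite {c \<in> {?c1..<t}. boundary c}"
      by (rule finite_subset[of _ "{?c1..<t}"]) auto
    moreover have "c0 \<notin> {c \<in> {?c1..<t}. boundary c}" using c1 by simp
    ultimately have "(\<Sum>c\<in>{c \<in> {c0..<t}. boundary c}. sum F {c..<next_boundary c})
        = sum F {c0..<?c1} + (\<Sum>c\<in>{c \<in> {?c1..<t}. boundary c}. sum F {c..<next_boundary c})"
      unfolding runs by (rule sum.insert)
    also have "\<dots> = sum F {c0..<t}"
      using IH sum_int_interval_split[of c0 ?c1 t F] c1 by simp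
    finally show ?thesis ..
  qed simp
qed

end

definition window_sum :: "int \<Rightarrow> (int \<Rightarrow> int) \<Rightarrow> int \<Rightarrow> int" where
  "window_sum r w i = (\<Sum>k\<in>{i - r..i + r}. w k)"

lemma window_sum_eq_prefix_sum:
  "r \<ge> 0 \<Longrightarrow> window_sum r w i = prefix_sum w (i + r + 1) - prefix_sum w (i - r)"
proof -
  assume "r \<ge> 0"
  moreover have "{i - r..i + r} = {i - r..<i + r + 1}" by auto
  ultimately show ?thesis using prefix_sum_diff[of "i - r" "i + r + 1" w] by (simp add: window_sum_def)
qed

locale majority_rule =
  fixes r :: int and v u :: "int \<Rightarrow> int"
  assumes radius_nonneg: "r \<ge> 0"
    and v_sign: "\<And>i. v i = 1 \<or> v i = -1"
    and u_eq: "\<And>i. u i = (if window_sum r v i > 0 then 1 else -1)"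
begin

lemma window_sum_odd: "odd (window_sum r v i)"
proof -
  have "even (\<Sum>k\<in>{i - r..i + r}. v k + 1)"
  proof (rule dvd_sum)
    show "2 dvd v k + 1" for k using v_sign[of k] by auto
  qed
  moreover have "(\<Sum>k\<in>{i - r..i + r}. v k + 1) = window_sum r v i + 2 * r + 1"
    using radius_nonneg by (simp add: sum.distrib window_sum_def)
  ultimately show ?thesis by simp
qed

lemma sign_window_sum: "u i * window_sum r v i \<ge> 1"
  using u_eq[of i] window_sum_odd[of i] by (cases "window_sum r v i = 0") auto

lemma window_at_change:
  assumes "u (a - 1) \<noteq> u a"
  shows "window_sum r v (a - 1) = u (a - 1)" "v (a + r) = u a" "v (a - r - 1) = u (a - 1)"
proof -
  have "window_sum r v (a - 1) = prefix_sum v (a + r) - prefix_sum v (a - r - 1)"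
    using window_sum_eq_prefix_sum[of r v "a - 1"] radius_nonneg by (simp add: algebra_simps)
  then have "window_sum r v a = window_sum r v (a - 1) + v (a + r) - v (a - r - 1)"
    using radius_nonneg window_sum_eq_prefix_sum[of r v a]
      prefix_sum_add1[of v "a + r"] prefix_sum_add1[of v "a - r - 1"] by simp
  then show "window_sum r v (a - 1) = u (a - 1)" "v (a + r) = u a" "v (a - r - 1) = u (a - 1)"
    using assms u_eq[of a] u_eq[of "a - 1"] sign_window_sum[of a] sign_window_sum[of "a - 1"]
      v_sign[of "a + r"] v_sign[of "a - r - 1"] by (auto split: if_splits)
qed

lemma majority_on_long_run:
  assumes run: "\<And>k. 0 \<le> k \<Longrightarrow> k \<le> r \<Longrightarrow> v (i + k) = v i" and k: "0 \<le> k" "k \<le> r"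
  shows "u (i + k) = v i"
proof -
  let ?W = "{i + k - r..i + k + r}" and ?R = "{i..i + r}"
  have R: "?R \<subseteq> ?W" using k by auto
  have "v i * v j \<ge> -1" for j using v_sign[of i] v_sign[of j] by auto
  then have "- int (card (?W - ?R)) \<le> (\<Sum>j\<in>?W - ?R. v i * v j)"
    using sum_bounded_below[of "?W - ?R" "-1" "\<lambda>j. v i * v j"] by simp
  moreover have "card (?W - ?R) = nat r" using R k by (simp add: card_Diff_subset)
  moreover have "(\<Sum>j\<in>?R. v i * v j) = (\<Sum>j\<in>?R. 1)"
  proof (rule sum.cong)
    fix j assume "j \<in> ?R"
    then have "v j = v i" using run[of "j - i"] by simp
    then show "v i * v j = 1" using v_sign[of i] by auto
  qed simp
  moreover have "(\<Sum>j\<in>?R. (1::int)) = r + 1" using radius_nonneg by simp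
  moreover have "v i * window_sum r v (i + k) = (\<Sum>j\<in>?W - ?R. v i * v j) + (\<Sum>j\<in>?R. v i * v j)"
    using R by (simp add: window_sum_def sum_distrib_left sum.subset_diff)
  ultimately have "v i * window_sum r v (i + k) \<ge> 1" using radius_nonneg by simp
  then show ?thesis using u_eq[of "i + k"] v_sign[of i] by auto
qed

end

lemma short_runs_if_majority_image_short:
  assumes "majority_rule r v u" "short_runs n r u" "\<And>i k. v (i + k * n) = v i"
  shows "short_runs n r v"
proof -
  interpret majority_rule r v u by fact
  interpret U: short_runs n r u by fact
  show ?thesis
  proof
    show "n \<ge> 1" by (rule U.period_pos)
    show "v (i + k * n) = v i" for i k by fact
    show "v i = 1 \<or> v i = -1" for i by (rule v_sign)
    show "\<exists>k\<in>{1..r}. v (i + k) \<noteq> v i" for i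
    proof (rule ccontr)
      assume "\<not> (\<exists>k\<in>{1..r}. v (i + k) \<noteq> v i)"
      then have run: "v (i + k) = v i" if "0 \<le> k" "k \<le> r" for k
        using that by (cases "k = 0") auto
      obtain k where "k \<in> {1..r}" "u (i + k) \<noteq> u i" using U.run_bound by blast
      then show False
        using majority_on_long_run[OF run, of k] majority_on_long_run[OF run, of 0] by simp
    qed
  qed
qed

lemma ex1_if_no_two_ordered:
  fixes P :: "'a::linorder \<Rightarrow> bool"
  assumes "\<exists>x. P x" "\<And>x y. P x \<Longrightarrow> P y \<Longrightarrow> x < y \<Longrightarrow> False"
  shows "\<exists>!x. P x"
  using assms by (metis linorder_neqE)

locale run_pair = U: short_runs n r u + V: short_runs n r v
  for n r :: int and u v :: "int \<Rightarrow> int"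
begin

definition one_boundary_per_block :: "int \<Rightarrow> bool" where
  "one_boundary_per_block s \<longleftrightarrow> (\<forall>c. V.boundary c \<longrightarrow>
     (\<exists>!a. c + s < a \<and> a \<le> V.next_boundary c + s \<and> U.boundary a))"

lemma next_boundary_in_block:
  assumes "one_boundary_per_block s" "V.boundary c"
  shows "c + s < U.next_boundary (c + s)" "U.next_boundary (c + s) \<le> V.next_boundary c + s"
    and "c + s < a \<Longrightarrow> a \<le> V.next_boundary c + s \<Longrightarrow> U.boundary a \<Longrightarrow> a = U.next_boundary (c + s)"
proof -
  obtain a0 where a0: "c + s < a0" "a0 \<le> V.next_boundary c + s" "U.boundary a0"
    and unique: "\<And>a. c + s < a \<Longrightarrow> a \<le> V.next_boundary c + s \<Longrightarrow> U.boundary a \<Longrightarrow> a = a0"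
    using assms unfolding one_boundary_per_block_def by blast
  have "U.next_boundary (c + s) \<le> a0" using U.next_boundary_le_boundary a0 by simp
  then have next_eq: "U.next_boundary (c + s) = a0"
    using unique[of "U.next_boundary (c + s)"] U.next_boundary_gt U.boundary_next_boundary a0(2)
    by simp
  then show "c + s < U.next_boundary (c + s)" "U.next_boundary (c + s) \<le> V.next_boundary c + s"
    using a0 by simp_all
  show "c + s < a \<Longrightarrow> a \<le> V.next_boundary c + s \<Longrightarrow> U.boundary a \<Longrightarrow> a = U.next_boundary (c + s)"
    using unique next_eq by simp
qed

lemma constant_in_block:
  assumes "one_boundary_per_block s" "V.boundary c"
  shows "c + s \<le> k \<Longrightarrow> k < U.next_boundary (c + s) \<Longrightarrow> u k = u (c + s)"
    and "U.next_boundary (c + s) \<le> k \<Longrightarrow> k \<le> V.next_boundary c + s \<Longrightarrow> u k = - u (c + s)"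
proof -
  show "c + s \<le> k \<Longrightarrow> k < U.next_boundary (c + s) \<Longrightarrow> u k = u (c + s)"
    by (rule U.constant_before_next_boundary)
  let ?e = "U.next_boundary (c + s)"
  have no_change: "u (j - 1) = u j" if "?e < j" "j \<le> V.next_boundary c + s" for j
  proof -
    have "c + s < j" using next_boundary_in_block(1)[OF assms] that(1) by simp
    then show ?thesis using next_boundary_in_block(3)[OF assms, of j] that unfolding U.boundary_def by auto
  qed
  show "u k = - u (c + s)" if "?e \<le> k" "k \<le> V.next_boundary c + s"
  proof -
    have "u k = u ?e" using constant_if_no_change[of ?e _ u k] no_change that by blast
    then show ?thesis using U.value_at_next_boundary by simp
  qed
qed

lemma bij_betw_next_boundary_mod:
  assumes "one_boundary_per_block s"
  shows "bij_betw (\<lambda>c. U.next_boundary (c + s) mod n)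
    {c \<in> {c0..<c0 + n}. V.boundary c} {a \<in> {0..<n}. U.boundary a}"
proof (rule bij_betw_mod_equivariant)
  show "n \<ge> 1" by (rule V.period_pos)
  show "V.boundary (c + k * n) = V.boundary c" for c k by (rule V.boundary_periodic)
  show "U.next_boundary (c + k * n + s) = U.next_boundary (c + s) + k * n" for c k
    using U.next_boundary_periodic[of "c + s" k] by (simp add: algebra_simps)
  show "inj_on (\<lambda>c. U.next_boundary (c + s)) {c. V.boundary c}"
  proof (intro strict_mono_on_imp_inj_on strict_mono_onI)
    fix c1 c2 assume "c1 \<in> {c. V.boundary c}" "c2 \<in> {c. V.boundary c}" "c1 < c2"
    then show "U.next_boundary (c1 + s) < U.next_boundary (c2 + s)"
      using next_boundary_in_block(2)[OF assms, of c1] next_boundary_in_block(1)[OF assms, of c2]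
        V.next_boundary_le_boundary[of c1 c2] by simp
  qed
  show "(\<lambda>c. U.next_boundary (c + s)) ` {c. V.boundary c} = {a. U.boundary a}"
  proof (intro equalityI subsetI)
    fix a assume "a \<in> {a. U.boundary a}"
    moreover obtain c where "V.boundary c" "c \<le> a - s - 1" "a - s - 1 < V.next_boundary c"
      using V.boundary_enclosing by blast
    ultimately show "a \<in> (\<lambda>c. U.next_boundary (c + s)) ` {c. V.boundary c}"
      using next_boundary_in_block(3)[OF assms, of c a] by auto
  qed (auto simp: U.boundary_next_boundary)
qed

end

locale majority_two_cycle = run_pair n r u v + uv: majority_rule r v u + vu: majority_rule r u v
  for n r :: int and u v :: "int \<Rightarrow> int"
begin

lemma swap: "majority_two_cycle n r v u"
  by (simp add: majority_two_cycle_def run_pair_def U.short_runs_axioms V.short_runs_axioms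
      uv.majority_rule_axioms vu.majority_rule_axioms)

lemma boundary_transfer:
  assumes "V.boundary c"
  shows "u (c + r) = v c" "u (c - (r + 1)) = - v c"
    and "prefix_sum u (c + r) - prefix_sum u (c - (r + 1)) = - v c"
proof -
  have "v (c - 1) \<noteq> v c" and flip: "v (c - 1) = - v c"
    using assms V.sign_flip_at_boundary unfolding V.boundary_def by simp_all
  note change = vu.window_at_change[OF this(1)]
  show "u (c + r) = v c" "u (c - (r + 1)) = - v c"
    using change(2,3) flip by (simp_all add: diff_diff_eq)
  show "prefix_sum u (c + r) - prefix_sum u (c - (r + 1)) = - v c"
    using change(1) flip window_sum_eq_prefix_sum[of r u "c - 1"] uv.radius_nonneg
    by (simp add: algebra_simps)
qed

lemma exists_boundary_after:
  assumes "V.boundary c"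
  shows "\<exists>a. c + r < a \<and> a \<le> V.next_boundary c + r \<and> U.boundary a"
proof -
  have "u (c + r) \<noteq> u (V.next_boundary c + r)"
    using boundary_transfer(1)[OF assms] boundary_transfer(1)[OF V.boundary_next_boundary]
      V.value_at_next_boundary[of c] V.sign[of c] by auto
  then show ?thesis
    using exists_change[of "c + r" "V.next_boundary c + r" u] V.next_boundary_gt[of c]
    by (auto simp: U.boundary_def)
qed

lemma exists_boundary_before:
  assumes "V.boundary c"
  shows "\<exists>a. c - (r + 1) < a \<and> a \<le> V.next_boundary c - (r + 1) \<and> U.boundary a"
proof -
  have "u (c - (r + 1)) \<noteq> u (V.next_boundary c - (r + 1))"
    using boundary_transfer(2)[OF assms] boundary_transfer(2)[OF V.boundary_next_boundary]
      V.value_at_next_boundary[of c] V.sign[of c] by auto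
  then show ?thesis
    using exists_change[of "c - (r + 1)" "V.next_boundary c - (r + 1)" u] V.next_boundary_gt[of c]
    by (auto simp: U.boundary_def)
qed

lemma one_boundary_per_block_after: "one_boundary_per_block r"
  unfolding one_boundary_per_block_def
proof (intro allI impI ex1_if_no_two_ordered)
  fix c assume c: "V.boundary c"
  show "\<exists>a. c + r < a \<and> a \<le> V.next_boundary c + r \<and> U.boundary a"
    by (rule exists_boundary_after[OF c])
  fix a1 a2
  assume a1: "c + r < a1 \<and> a1 \<le> V.next_boundary c + r \<and> U.boundary a1"
    and a2: "c + r < a2 \<and> a2 \<le> V.next_boundary c + r \<and> U.boundary a2" and "a1 < a2"
  then have "U.next_boundary a1 \<le> a2" using U.next_boundary_le_boundary by blast
  moreover obtain b where "a1 - (r + 1) < b" "b \<le> U.next_boundary a1 - (r + 1)" "V.boundary b"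
    using majority_two_cycle.exists_boundary_before[OF swap] a1 by blast
  ultimately show False
    using V.no_boundary_before_next[of c b] a1 a2 by simp
qed

lemma one_boundary_per_block_before: "one_boundary_per_block (- (r + 1))"
  unfolding one_boundary_per_block_def add_uminus_conv_diff
proof (intro allI impI ex1_if_no_two_ordered)
  fix c assume c: "V.boundary c"
  show "\<exists>a. c - (r + 1) < a \<and> a \<le> V.next_boundary c - (r + 1) \<and> U.boundary a"
    by (rule exists_boundary_before[OF c])
  fix a1 a2
  assume a1: "c - (r + 1) < a1 \<and> a1 \<le> V.next_boundary c - (r + 1) \<and> U.boundary a1"
    and a2: "c - (r + 1) < a2 \<and> a2 \<le> V.next_boundary c - (r + 1) \<and> U.boundary a2"
    and "a1 < a2"
  then have "U.next_boundary a1 \<le> a2" using U.next_boundary_le_boundary by blast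
  moreover obtain b where "a1 + r < b" "b \<le> U.next_boundary a1 + r" "V.boundary b"
    using majority_two_cycle.exists_boundary_after[OF swap] a1 by blast
  ultimately show False
    using V.no_boundary_before_next[of c b] a1 a2 by simp
qed

lemma values_around_block:
  assumes c: "V.boundary c"
  shows "c + r \<le> k \<Longrightarrow> k < U.next_boundary (c + r) \<Longrightarrow> u k = v c"
    and "U.next_boundary (c + r) \<le> k \<Longrightarrow> k \<le> V.next_boundary c + r \<Longrightarrow> u k = - v c"
    and "c - (r + 1) \<le> k \<Longrightarrow> k < U.next_boundary (c - (r + 1)) \<Longrightarrow> u k = - v c"
    and "U.next_boundary (c - (r + 1)) \<le> k \<Longrightarrow> k \<le> V.next_boundary c - (r + 1) \<Longrightarrow> u k = v c"
proof -
  note after = constant_in_block[OF one_boundary_per_block_after c, of k]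
  note before = constant_in_block[OF one_boundary_per_block_before c, of k, unfolded add_uminus_conv_diff]
  show "c + r \<le> k \<Longrightarrow> k < U.next_boundary (c + r) \<Longrightarrow> u k = v c"
    and "U.next_boundary (c + r) \<le> k \<Longrightarrow> k \<le> V.next_boundary c + r \<Longrightarrow> u k = - v c"
    using after boundary_transfer(1)[OF c] by simp_all
  show "c - (r + 1) \<le> k \<Longrightarrow> k < U.next_boundary (c - (r + 1)) \<Longrightarrow> u k = - v c"
    and "U.next_boundary (c - (r + 1)) \<le> k \<Longrightarrow> k \<le> V.next_boundary c - (r + 1) \<Longrightarrow> u k = v c"
    using before boundary_transfer(2)[OF c] by simp_all
qed

text \<open>\<open>u\<close> is constant on each side of \<open>e\<close> and of \<open>f\<close>, and the windows at \<open>c - 1\<close> and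
  \<open>c' - 1\<close> force \<open>e + f = c + c'\<close>.\<close>

lemma sum_block_eq_prefix_sum_diff:
  assumes c: "V.boundary c"
  shows "sum v {c..<V.next_boundary c} =
    prefix_sum u (U.next_boundary (c + r)) - prefix_sum u (U.next_boundary (c - (r + 1)))"
proof -
  define c' e f g
    where "c' = V.next_boundary c" and "e = U.next_boundary (c + r)"
      and "f = U.next_boundary (c - (r + 1))" and "g = v c"
  have c': "c < c'" "V.boundary c'" "v c' = - g"
    unfolding c'_def g_def using V.next_boundary_gt V.boundary_next_boundary V.value_at_next_boundary
    by auto
  have e: "c + r < e" "e \<le> c' + r"
    using next_boundary_in_block(1,2)[OF one_boundary_per_block_after c] unfolding c'_def e_def
    by simp_all
  have f: "c - (r + 1) < f" "f \<le> c' - (r + 1)"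
    using next_boundary_in_block(1,2)[OF one_boundary_per_block_before c, unfolded add_uminus_conv_diff]
    unfolding c'_def f_def
    by simp_all
  note u = values_around_block[OF c, folded c'_def e_def f_def g_def]
  have "prefix_sum u e - prefix_sum u (c + r) = g * (e - (c + r))"
    using e u(1) by (intro prefix_sum_diff_const) auto
  moreover have "prefix_sum u (c' + r) - prefix_sum u e = - g * (c' + r - e)"
    using e u(2) by (intro prefix_sum_diff_const) auto
  moreover have "prefix_sum u f - prefix_sum u (c - (r + 1)) = - g * (f - (c - (r + 1)))"
    using f u(3) by (intro prefix_sum_diff_const) auto
  moreover have "prefix_sum u (c' - (r + 1)) - prefix_sum u f = g * (c' - (r + 1) - f)"
    using f u(4) by (intro prefix_sum_diff_const) auto
  moreover have "prefix_sum u (c + r) - prefix_sum u (c - (r + 1)) = - g"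
    using boundary_transfer(3)[OF c] unfolding g_def .
  moreover have "prefix_sum u (c' + r) - prefix_sum u (c' - (r + 1)) = g"
    using boundary_transfer(3)[OF c'(2)] c'(3) by simp
  moreover have "prefix_sum v c' - prefix_sum v c = g * (c' - c)"
    using c'(1) V.constant_before_next_boundary[of c, folded c'_def g_def]
    by (intro prefix_sum_diff_const) auto
  moreover have "g = 1 \<or> g = -1" unfolding g_def using V.sign by simp
  ultimately show ?thesis using prefix_sum_diff[of c c' v] c'(1)
    unfolding c'_def[symmetric] e_def[symmetric] f_def[symmetric] by (elim disjE) simp_all
qed

lemma period_sum_multiple: "\<exists>D \<ge> 2. sum v {0..<n} = D * sum u {0..<n}"
proof -
  have n: "n \<ge> 1" by (rule V.period_pos)
  obtain c0 where c0: "V.boundary c0" using V.boundary_within_radius by blast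
  define G where "G = {c \<in> {c0..<c0 + n}. V.boundary c}"
  define A where "A = {a \<in> {0..<n}. U.boundary a}"
  define e where "e c = U.next_boundary (c + r)" for c
  define f where "f c = U.next_boundary (c - (r + 1))" for c
  define De where "De = (\<Sum>c\<in>G. e c div n)"
  define Df where "Df = (\<Sum>c\<in>G. f c div n)"
  have bij_e: "bij_betw (\<lambda>c. e c mod n) G A"
    unfolding e_def G_def A_def by (rule bij_betw_next_boundary_mod[OF one_boundary_per_block_after])
  have bij_f: "bij_betw (\<lambda>c. f c mod n) G A"
    unfolding f_def G_def A_def
    by (rule bij_betw_next_boundary_mod[OF one_boundary_per_block_before, unfolded add_uminus_conv_diff])
  have prefix_sum_u: "prefix_sum u (a + k * n) = prefix_sum u a + k * prefix_sum u n" for a k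
    using prefix_sum_add_periods[of u n] U.periodic[of _ 1] n by simp
  have runs: "sum F {c0..<c0 + n} = (\<Sum>c\<in>G. sum F {c..<V.next_boundary c})" for F :: "int \<Rightarrow> int"
    unfolding G_def using V.sum_by_runs[OF c0, of "c0 + n"] V.boundary_periodic[of c0 1] c0 n by simp
  have "sum v {0..<n} = sum v {c0..<c0 + n}"
    using prefix_sum_diff[of c0 "c0 + n" v] prefix_sum_add_period[of v n c0] V.periodic[of _ 1] n
    by (simp add: prefix_sum_def)
  also have "\<dots> = (\<Sum>c\<in>G. prefix_sum u (e c) - prefix_sum u (f c))"
    unfolding runs e_def f_def G_def by (rule sum.cong) (simp_all add: sum_block_eq_prefix_sum_diff)
  also have "\<dots> = (De - Df) * prefix_sum u n"
    using sum_reindex_mod[OF bij_e prefix_sum_u] sum_reindex_mod[OF bij_f prefix_sum_u]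
    unfolding De_def Df_def by (simp add: sum_subtractf algebra_simps)
  finally have sum_v: "sum v {0..<n} = (De - Df) * sum u {0..<n}"
    using n by (simp add: prefix_sum_def)
  have "n = (\<Sum>c\<in>G. V.next_boundary c - c)"
    using runs[of "\<lambda>_. 1"] V.next_boundary_gt n by (simp add: less_imp_le)
  also have "\<dots> < (\<Sum>c\<in>G. e c - f c)"
  proof (rule sum_strict_mono)
    show "finite G" unfolding G_def by (rule finite_subset[of _ "{c0..<c0 + n}"]) auto
    have "c0 \<in> G" using c0 n unfolding G_def by simp
    then show "G \<noteq> {}" by blast
    fix c assume "c \<in> G"
    then have c: "V.boundary c" unfolding G_def by simp
    show "V.next_boundary c - c < e c - f c"
      using next_boundary_in_block(1)[OF one_boundary_per_block_after c]
        next_boundary_in_block(2)[OF one_boundary_per_block_before c, unfolded add_uminus_conv_diff]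
        V.next_boundary_le[of c]
      unfolding e_def f_def by simp
  qed
  also have "\<dots> = n * (De - Df)"
    using sum_reindex_mod[OF bij_e, of id n] sum_reindex_mod[OF bij_f, of id n]
    unfolding De_def Df_def by (simp add: sum_subtractf algebra_simps)
  finally have "n * 1 < n * (De - Df)" by simp
  then have "De - Df \<ge> 2" using n mult_less_cancel_left_pos[of n 1 "De - Df"] by simp
  then show ?thesis using sum_v by blast
qed

lemma period_sum_zero: "sum u {0..<n} = 0"
proof -
  obtain D1 where D1: "D1 \<ge> 2" "sum v {0..<n} = D1 * sum u {0..<n}"
    using period_sum_multiple by blast
  obtain D2 where D2: "D2 \<ge> 2" "sum u {0..<n} = D2 * sum v {0..<n}"
    using majority_two_cycle.period_sum_multiple[OF swap] by blast
  have "(D2 * D1 - 1) * sum u {0..<n} = 0"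
    using D1(2) D2(2) by (simp add: algebra_simps)
  moreover have "D2 * D1 \<ge> 2 * 2" using D1(1) D2(1) by (intro mult_mono) auto
  ultimately show ?thesis by simp
qed

end

lemma sum_pm_one_eq_card_diff:
  fixes f :: "'a \<Rightarrow> nat"
  assumes "finite D" "\<And>d. d \<in> D \<Longrightarrow> f d = 0 \<or> f d = 1"
  shows "(\<Sum>d\<in>D. 2 * int (f d) - 1) = int (card {d\<in>D. f d = 1}) - int (card {d\<in>D. f d = 0})"
proof -
  have "(\<Sum>d\<in>D. 2 * int (f d) - 1) = (\<Sum>d\<in>D. if f d = 1 then 1 else - 1)"
    using assms(2) by (intro sum.cong) auto
  also have "\<dots> = int (card (D \<inter> {d. f d = 1})) - int (card (D \<inter> - {d. f d = 1}))"
    using assms(1) by (simp add: sum.If_cases)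
  also have "D \<inter> - {d. f d = 1} = {d\<in>D. f d = 0}"
    using assms(2) by auto
  finally show ?thesis by (simp add: Collect_conj_eq Int_commute)
qed

lemma card_split_by_01:
  fixes f :: "'a \<Rightarrow> nat"
  assumes "finite D" "\<And>d. d \<in> D \<Longrightarrow> f d = 0 \<or> f d = 1"
  shows "card {d\<in>D. f d = 1} + card {d\<in>D. f d = 0} = card D"
proof -
  have "D = {d\<in>D. f d = 1} \<union> {d\<in>D. f d = 0}" using assms(2) by blast
  then have "card D = card ({d\<in>D. f d = 1} \<union> {d\<in>D. f d = 0})" by (rule arg_cong)
  also have "\<dots> = card {d\<in>D. f d = 1} + card {d\<in>D. f d = 0}"
    by (rule card_Un_disjoint) (use assms(1) in auto)
  finally show ?thesis ..
qed

definition pm_signal :: "int \<Rightarrow> (int \<Rightarrow> nat) \<Rightarrow> int \<Rightarrow> int" where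
  "pm_signal n \<tau> i = 2 * int (\<tau> (i mod n)) - 1"

lemma pm_signal_periodic: "pm_signal n \<tau> (i + k * n) = pm_signal n \<tau> i"
  by (simp add: pm_signal_def)

lemma maj_mod: "maj n r \<tau> (i mod n) = maj n r \<tau> i"
  unfolding maj_def win_count_def by (simp add: mod_add_left_eq)

lemma window_sum_pm_signal:
  assumes "\<And>j. \<tau> (j mod n) \<in> {0, 1}"
  shows "window_sum r (pm_signal n \<tau>) i = int (win_count n r \<tau> i 1) - int (win_count n r \<tau> i 0)"
proof -
  have "window_sum r (pm_signal n \<tau>) i = (\<Sum>d\<in>{-r..r}. pm_signal n \<tau> (i + d))"
  proof -
    have "{i - r..i + r} = (+) i ` {-r..r}" by (simp add: add.commute)
    moreover have "inj_on ((+) i) {-r..r}" by (simp add: inj_on_def)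
    ultimately show ?thesis unfolding window_sum_def by (simp only: sum.reindex comp_def)
  qed
  also have "\<dots> = int (win_count n r \<tau> i 1) - int (win_count n r \<tau> i 0)"
    unfolding pm_signal_def win_count_def by (rule sum_pm_one_eq_card_diff) (use assms in auto)
  finally show ?thesis .
qed

lemma majority_rule_pm_signal:
  assumes "r \<ge> 0" "\<And>j. \<tau> (j mod n) \<in> {0, 1}"
  shows "majority_rule r (pm_signal n \<tau>) (pm_signal n (maj n r \<tau>))"
proof
  show "r \<ge> 0" by fact
  show "pm_signal n \<tau> i = 1 \<or> pm_signal n \<tau> i = -1" for i
    using assms(2)[of i] by (auto simp: pm_signal_def)
  show "pm_signal n (maj n r \<tau>) i = (if window_sum r (pm_signal n \<tau>) i > 0 then 1 else -1)" for i
  proof -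
    have "win_count n r \<tau> i 1 + win_count n r \<tau> i 0 = card {-r..r}"
      unfolding win_count_def by (rule card_split_by_01) (use assms(2) in auto)
    then have "int (win_count n r \<tau> i 1) + int (win_count n r \<tau> i 0) = 2 * r + 1"
      using assms(1) by simp
    then have "win_count n r \<tau> i 1 \<noteq> win_count n r \<tau> i 0" by presburger
    then show ?thesis
      using window_sum_pm_signal[of \<tau> n r i] assms(2) unfolding pm_signal_def maj_mod
      by (auto simp: maj_def)
  qed
qed

lemma short_runs_pm_signal:
  assumes n: "n \<ge> 1" and binary: "\<And>j. \<tau> (j mod n) \<in> {0, 1}"
    and covered: "\<forall>i\<in>{0..<n}. \<exists>s L \<beta>. max_block n \<tau> s L \<beta> \<and> in_block n s L i"
    and short: "\<forall>s L \<beta>. max_block n \<tau> s L \<beta> \<longrightarrow> L \<le> r"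
  shows "short_runs n r (pm_signal n \<tau>)"
proof
  show "n \<ge> 1" by fact
  show "pm_signal n \<tau> (i + k * n) = pm_signal n \<tau> i" for i k by (rule pm_signal_periodic)
  show "pm_signal n \<tau> i = 1 \<or> pm_signal n \<tau> i = -1" for i
    using binary[of i] by (auto simp: pm_signal_def)
  show "\<exists>k\<in>{1..r}. pm_signal n \<tau> (i + k) \<noteq> pm_signal n \<tau> i" for i
  proof -
    have "i mod n \<in> {0..<n}" using n by simp
    then obtain s L \<beta> where block: "max_block n \<tau> s L \<beta>" and "in_block n s L (i mod n)"
      using covered by blast
    then obtain k0 where k0: "k0 \<in> {0..<L}" "(s + k0) mod n = i mod n"
      unfolding in_block_def by blast
    have L_le: "L \<le> r" using short block by blast
    have "(i + (L - k0)) mod n = ((s + k0) mod n + (L - k0)) mod n"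
      using k0(2) by (simp add: mod_add_left_eq)
    also have "\<dots> = (s + L) mod n" by (simp add: mod_add_left_eq)
    finally have "\<tau> ((i + (L - k0)) mod n) = 1 - \<beta>"
      using block unfolding max_block_def by simp
    moreover have "\<tau> (i mod n) = \<beta>"
      using block k0(1) unfolding max_block_def k0(2)[symmetric] by blast
    moreover have "L - k0 \<in> {1..r}" using k0(1) L_le by simp
    ultimately show ?thesis using binary[of i] by (intro bexI[of _ "L - k0"]) (auto simp: pm_signal_def)
  qed
qed

theorem claim21:
  fixes n r :: int and \<sigma> :: "int \<Rightarrow> nat"
  assumes "r \<ge> 1" and "n \<ge> 1"
    and "\<forall>i\<in>{0..<n}. \<sigma> i \<in> {0, 1}"
    and "temporally_periodic n r \<sigma>"
    and "\<forall>i\<in>{0..<n}. \<exists>s L \<beta>. max_block n \<sigma> s L \<beta> \<and> in_block n s L i"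
    and "\<forall>s L \<beta>. max_block n \<sigma> s L \<beta> \<longrightarrow> L \<le> r"
  shows "card {i\<in>{0..<n}. \<sigma> i = 0} = card {i\<in>{0..<n}. \<sigma> i = 1}"
proof -
  let ?x = "pm_signal n \<sigma>" and ?y = "pm_signal n (maj n r \<sigma>)"
  have r: "r \<ge> 0" using assms(1) by simp
  have \<sigma>_binary: "\<sigma> (j mod n) \<in> {0, 1}" for j using assms(2,3) by simp
  have maj_binary: "maj n r \<sigma> (j mod n) \<in> {0, 1}" for j by (simp add: maj_def)
  have "pm_signal n (maj n r (maj n r \<sigma>)) = ?x"
    using assms(2,4) unfolding temporally_periodic_def pm_signal_def by auto
  then have y_to_x: "majority_rule r ?y ?x"
    using majority_rule_pm_signal[of r "maj n r \<sigma>" n, OF r maj_binary] by simp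
  have x_to_y: "majority_rule r ?x ?y" by (rule majority_rule_pm_signal[of r \<sigma> n, OF r \<sigma>_binary])
  have x_short: "short_runs n r ?x" by (rule short_runs_pm_signal[OF assms(2) \<sigma>_binary assms(5,6)])
  then have "short_runs n r ?y"
    using short_runs_if_majority_image_short[OF y_to_x] pm_signal_periodic by blast
  then have "majority_two_cycle n r ?x ?y"
    using x_short x_to_y y_to_x by (simp add: majority_two_cycle_def run_pair_def)
  then have "sum ?x {0..<n} = 0" by (rule majority_two_cycle.period_sum_zero)
  moreover have "sum ?x {0..<n} = (\<Sum>i\<in>{0..<n}. 2 * int (\<sigma> i) - 1)"
    unfolding pm_signal_def by (rule sum.cong) simp_all
  moreover have "\<dots> = int (card {i\<in>{0..<n}. \<sigma> i = 1}) - int (card {i\<in>{0..<n}. \<sigma> i = 0})"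
    by (rule sum_pm_one_eq_card_diff) (use assms(3) in auto)
  ultimately show ?thesis by simp
qed

end
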